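(* Perform a round-robin tournament on the $n$ elements $x_1,\dots,x_n$ (every pair is compared exactly once), and list the elements in increasing order of their number of wins, breaking ties arbitrarily. Then the resulting list is $2$-sorted: whenever $y$ is listed before $x$ we have $x \ge y - 2$ (equivalently, if $y < x-2$ then $y$ is listed before $x$).
   Context: Model of imprecise comparisons: there are $n$ elements $x_1,\dots,x_n$, each with a fixed unknown real value; we identify an element with its value. An algorithm accesses the elements only through a comparator: asked to compare $x_i$ and $x_j$, it answers either "$x_i \ge x_j$" (we say $x_i$ defeats $x_j$, or $x_j$ loses to $x_i$) or "$x_j \ge x_i$". If $|x_i-x_j|>1$ the answer is correct; if $|x_i-x_j|\le 1$ the answer is arbitrary (possibly chosen adversarially and adaptively, and possibly different on repeated queries). A round-robin tournament on a set compares every pair of its elements once; the number of wins of an element is the number of elements it defeats. A list $x_{\pi(1)},\dots,x_{\pi(n)}$ is $k$-sorted if $x_{\pi(i)} \ge x_{\pi(j)} - k$ for all $i>j$. *)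

theory Defs
  imports Main Complex_Main
begin

text \<open>The outcome of a round-robin
tournament is a relation beats i j ("x i defeats x j", i.e. the comparator answered
x i \<ge> x j): for each pair of distinct indices exactly one of them wins, and the
answer is correct whenever the values differ by more than 1.\<close>

definition round_robin :: "nat \<Rightarrow> (nat \<Rightarrow> real) \<Rightarrow> (nat \<Rightarrow> nat \<Rightarrow> bool) \<Rightarrow> bool" where
  "round_robin n x beats \<longleftrightarrow>
     (\<forall>i<n. \<forall>j<n. i \<noteq> j \<longrightarrow> (beats i j \<longleftrightarrow> \<not> beats j i)) \<and>
     (\<forall>i<n. \<forall>j<n. x i > x j + 1 \<longrightarrow> beats i j)"

definition wins :: "nat \<Rightarrow> (nat \<Rightarrow> nat \<Rightarrow> bool) \<Rightarrow> nat \<Rightarrow> nat" where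
  "wins n beats i = card {j. j < n \<and> j \<noteq> i \<and> beats i j}"

definition k_sorted :: "real \<Rightarrow> (nat \<Rightarrow> real) \<Rightarrow> nat list \<Rightarrow> bool" where
  "k_sorted k x ps \<longleftrightarrow> (\<forall>i<length ps. \<forall>j<length ps. i > j \<longrightarrow> x (ps ! i) \<ge> x (ps ! j) - k)"

end

theory Submission
  imports Defs
begin

text \<open>If \<open>y < x - 2\<close>, every element that \<open>y\<close> defeats is at most \<open>y + 1 < x - 1\<close>, so \<open>x\<close>
  defeats it as well; in addition \<open>x\<close> defeats \<open>y\<close> itself. Hence \<open>x\<close> has strictly more wins
  than \<open>y\<close>, and a list sorted by wins can never place \<open>x\<close> before \<open>y\<close>.\<close>

lemma round_robin_beaten_le:
  assumes rr: "round_robin n x beats" and "a < n" "j < n" "j \<noteq> a"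
    and "beats a j"
  shows "x j \<le> x a + 1"
proof (rule ccontr)
  have antisym: "beats a j \<longleftrightarrow> \<not> beats j a"
    and correct: "x j > x a + 1 \<Longrightarrow> beats j a"
    using rr assms(2-4) unfolding round_robin_def by blast+
  assume "\<not> x j \<le> x a + 1"
  with antisym correct \<open>beats a j\<close> show False by simp
qed

lemma wins_less_of_gap:
  assumes rr: "round_robin n x beats" and a: "a < n" and b: "b < n"
    and gap: "x a < x b - 2"
  shows "wins n beats a < wins n beats b"
proof -
  have correct: "\<And>i j. i < n \<Longrightarrow> j < n \<Longrightarrow> x i > x j + 1 \<Longrightarrow> beats i j"
    using rr unfolding round_robin_def by blast
  let ?A = "{j. j < n \<and> j \<noteq> a \<and> beats a j}"
  let ?B = "{j. j < n \<and> j \<noteq> b \<and> beats b j}"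
  have "?A \<subseteq> ?B"
  proof
    fix j assume j: "j \<in> ?A"
    then have "x j \<le> x a + 1" using round_robin_beaten_le[OF rr a] by blast
    then have "x b > x j + 1" "j \<noteq> b" using gap by auto
    then show "j \<in> ?B" using correct[of b j] j b by auto
  qed
  moreover have "a \<in> ?B - ?A" using correct[of b a] a b gap by auto
  ultimately have "?A \<subset> ?B" by blast
  then have "card ?A < card ?B" by (rule psubset_card_mono[rotated]) auto
  then show ?thesis unfolding wins_def .
qed

theorem mainTheorem1:
  fixes n :: nat and x :: "nat \<Rightarrow> real" and beats :: "nat \<Rightarrow> nat \<Rightarrow> bool" and ps :: "nat list"
  assumes "round_robin n x beats"
    and "distinct ps" and "set ps = {0..<n}"
    and "sorted (map (wins n beats) ps)"
  shows "k_sorted 2 x ps"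
  unfolding k_sorted_def
proof (intro allI impI, rule ccontr)
  fix i j assume i: "i < length ps" and j: "j < length ps" and "j < i"
    and "\<not> x (ps ! j) - 2 \<le> x (ps ! i)"
  moreover have "ps ! i < n" "ps ! j < n" using i j assms(3) nth_mem by fastforce+
  ultimately have "wins n beats (ps ! i) < wins n beats (ps ! j)"
    using wins_less_of_gap[OF assms(1)] by auto
  moreover have "wins n beats (ps ! j) \<le> wins n beats (ps ! i)"
    using assms(4) \<open>j < i\<close> i by (simp add: sorted_iff_nth_mono_less)
  ultimately show False by simp
qed

end
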